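(* Let $G$ be a group and $c\in G$. If the set $\{x\in G:x^2=c\}$ is $4$-large in $G$, then $G$ is abelian of exponent $2$, and $c=1$.
   Context: A subset $X\subseteq G$ is $k$-large in $G$ if the intersection of any $k$ left translates $g_1X\cap\dots\cap g_kX$ ($g_i\in G$) is non-empty. *)

theory Defs
  imports "HOL-Algebra.Algebra"
begin

definition k_large :: "('a, 'b) monoid_scheme \<Rightarrow> nat \<Rightarrow> 'a set \<Rightarrow> bool" where
  "k_large Gr k S \<longleftrightarrow> S \<subseteq> carrier Gr \<and>
     (\<forall>g. (\<forall>i<k. g i \<in> carrier Gr) \<longrightarrow> \<Inter> ((\<lambda>i. l_coset Gr (g i) S) ` {..<k}) \<noteq> {})"

end

theory Submission
  imports Defs
begin

text \<open>Let \<open>S = {x. x\<^sup>2 = c}\<close>. For any \<open>a, b\<close>, 4-largeness gives some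
  \<open>y \<in> S \<inter> a\<inverse>S \<inter> b\<inverse>S \<inter> (a b)\<inverse>S\<close>. Now \<open>(h y)\<^sup>2 = y\<^sup>2\<close> means \<open>h y h = y\<close>, i.e. conjugation
  by \<open>y\<close> inverts \<open>h\<close>; so it inverts \<open>a\<close>, \<open>b\<close> and \<open>a b\<close>, and being a homomorphism it forces
  \<open>(a b)\<inverse> = a\<inverse> b\<inverse>\<close>, i.e. \<open>a b = b a\<close>. In the abelian group conjugation is trivial, so
  \<open>x = x\<inverse>\<close> for all \<open>x\<close>, and finally \<open>c = y\<^sup>2 = \<one>\<close>.\<close>

lemma k_large_common_right_translate:
  fixes G (structure)
  assumes "group G" "k_large G (length hs) S" "set hs \<subseteq> carrier G" "hs \<noteq> []"
  obtains y where "y \<in> carrier G" "\<And>h. h \<in> set hs \<Longrightarrow> h \<otimes> y \<in> S"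
proof -
  interpret group G by fact
  have S: "S \<subseteq> carrier G" using assms(2) by (simp add: k_large_def)
  have large: "\<forall>g. (\<forall>i<length hs. g i \<in> carrier G) \<longrightarrow> (\<Inter>i<length hs. g i <# S) \<noteq> {}"
    using assms(2) unfolding k_large_def by (rule conjunct2)
  have "(\<Inter>i<length hs. inv (hs ! i) <# S) \<noteq> {}"
    by (rule large[rule_format]) (use assms(3) nth_mem in blast)
  then obtain y where y: "\<And>i. i < length hs \<Longrightarrow> y \<in> inv (hs ! i) <# S" by blast
  have translate: "h \<otimes> y \<in> S \<and> y \<in> carrier G" if "h \<in> set hs" for h
  proof -
    obtain i where "i < length hs" "hs ! i = h" using \<open>h \<in> set hs\<close> by (metis in_set_conv_nth)
    then obtain s where s: "s \<in> S" "y = inv h \<otimes> s" using y unfolding l_coset_def by blast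
    have "h \<in> carrier G" "s \<in> carrier G" using that assms(3) s S by auto
    then show ?thesis using s by (simp add: m_assoc[symmetric])
  qed
  from assms(4) obtain h where "h \<in> set hs" by (cases hs) auto
  then show thesis using translate that by blast
qed

lemma (in group) inv_conj_eq_if_translate_same_square:
  assumes "h \<in> carrier G" "y \<in> carrier G" "(h \<otimes> y) \<otimes> (h \<otimes> y) = y \<otimes> y"
  shows "inv y \<otimes> h \<otimes> y = inv h"
proof -
  have "(h \<otimes> y \<otimes> h) \<otimes> y = y \<otimes> y" using assms by (simp add: m_assoc)
  then have hyh: "h \<otimes> y \<otimes> h = y" using assms by (metis m_closed r_cancel)
  have "(inv y \<otimes> h \<otimes> y) \<otimes> h = inv y \<otimes> (h \<otimes> y \<otimes> h)" using assms by (simp add: m_assoc)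
  also have "\<dots> = \<one>" using hyh assms by simp
  finally show ?thesis using assms by (metis inv_equality m_closed inv_closed)
qed

lemma (in group) commute_if_conj_inverts:
  assumes "a \<in> carrier G" "b \<in> carrier G" "y \<in> carrier G"
    and "inv y \<otimes> a \<otimes> y = inv a" "inv y \<otimes> b \<otimes> y = inv b"
    and "inv y \<otimes> (a \<otimes> b) \<otimes> y = inv (a \<otimes> b)"
  shows "a \<otimes> b = b \<otimes> a"
proof -
  have "inv y \<otimes> (a \<otimes> b) \<otimes> y = inv y \<otimes> a \<otimes> (y \<otimes> inv y) \<otimes> b \<otimes> y"
    using assms(1-3) by (simp add: m_assoc)
  also have "\<dots> = (inv y \<otimes> a \<otimes> y) \<otimes> (inv y \<otimes> b \<otimes> y)"
    using assms(1-3) by (simp only: m_assoc m_closed inv_closed)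
  finally have "inv y \<otimes> (a \<otimes> b) \<otimes> y = (inv y \<otimes> a \<otimes> y) \<otimes> (inv y \<otimes> b \<otimes> y)" .
  then have "inv (a \<otimes> b) = inv a \<otimes> inv b" by (simp only: assms(4-6))
  also have "\<dots> = inv (b \<otimes> a)" using assms(1,2) by (simp add: inv_mult_group)
  finally have "inv (a \<otimes> b) = inv (b \<otimes> a)" .
  from inj_onD[OF inv_inj this] show ?thesis using assms(1,2) by simp
qed

lemma (in group) conj_inverting_square_root:
  assumes "k_large G 4 {x \<in> carrier G. x \<otimes> x = c}" "a \<in> carrier G" "b \<in> carrier G"
  obtains y where "y \<in> carrier G" "y \<otimes> y = c"
    "inv y \<otimes> a \<otimes> y = inv a" "inv y \<otimes> b \<otimes> y = inv b"
    "inv y \<otimes> (a \<otimes> b) \<otimes> y = inv (a \<otimes> b)"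
proof -
  have "k_large G (length [\<one>, a, b, a \<otimes> b]) {x \<in> carrier G. x \<otimes> x = c}"
    using assms(1) by (simp add: numeral_eq_Suc)
  then obtain y where y: "y \<in> carrier G"
    and translates: "\<And>h. h \<in> set [\<one>, a, b, a \<otimes> b] \<Longrightarrow> h \<otimes> y \<in> {x \<in> carrier G. x \<otimes> x = c}"
    by (rule k_large_common_right_translate[OF is_group]) (use assms(2,3) in auto)
  have sq: "(h \<otimes> y) \<otimes> (h \<otimes> y) = c" if "h \<in> {\<one>, a, b, a \<otimes> b}" for h
    using translates[of h] that by simp
  have "y \<otimes> y = c" using sq[of \<one>] y by simp
  have inverts: "inv y \<otimes> h \<otimes> y = inv h" if "h \<in> {a, b, a \<otimes> b}" for h
  proof (rule inv_conj_eq_if_translate_same_square[OF _ y])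
    show "h \<in> carrier G" using that assms(2,3) by auto
    show "(h \<otimes> y) \<otimes> (h \<otimes> y) = y \<otimes> y" using sq that \<open>y \<otimes> y = c\<close> by blast
  qed
  show thesis by (rule that) (use y \<open>y \<otimes> y = c\<close> inverts in auto)
qed

theorem theorem4p1:
  fixes G (structure) and c :: 'a
  assumes "group G" and "c \<in> carrier G"
    and "k_large G 4 {x \<in> carrier G. x \<otimes> x = c}"
  shows "comm_group G \<and> (\<forall>x\<in>carrier G. x \<otimes> x = \<one>) \<and> c = \<one>"
proof -
  interpret group G by fact
  have comm: "a \<otimes> b = b \<otimes> a" if ab: "a \<in> carrier G" "b \<in> carrier G" for a b
  proof -
    obtain y where "y \<in> carrier G" "inv y \<otimes> a \<otimes> y = inv a" "inv y \<otimes> b \<otimes> y = inv b"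
      "inv y \<otimes> (a \<otimes> b) \<otimes> y = inv (a \<otimes> b)"
      using conj_inverting_square_root[OF assms(3) ab] by blast
    then show ?thesis using commute_if_conj_inverts ab by blast
  qed
  interpret comm_group G by (rule group_comm_groupI) (use comm in auto)
  have exp2: "x \<otimes> x = \<one>" if x: "x \<in> carrier G" for x
  proof -
    obtain y where "y \<in> carrier G" "inv y \<otimes> x \<otimes> y = inv x"
      using conj_inverting_square_root[OF assms(3) x x] by blast
    moreover have "inv y \<otimes> x \<otimes> y = x" if "y \<in> carrier G" for y
      using x that by (simp add: m_comm[of "inv y" x] m_assoc)
    ultimately have "x \<otimes> x = x \<otimes> inv x" by simp
    then show ?thesis using x by simp
  qed
  obtain y where "y \<in> carrier G" "y \<otimes> y = c"
    using conj_inverting_square_root[OF assms(3) one_closed one_closed] by blast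
  then have "c = \<one>" using exp2 by blast
  then show ?thesis using exp2 comm_group_axioms by blast
qed

end
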